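(* For every $k\in\mathcal K$, the map $S\to\mathbb Z$, $s\mapsto d_k^{ur,\dagger}(s)$, is odd dominant.
   Context: Fix a prime $p\ge7$ and $k_0\in\{2,\dots,p\}$. $\{n\}$ is the residue of $n$ mod $p-1$ in $\{0,\dots,p-2\}$. $\mathcal K=\{k\ge2:k\equiv k_0\pmod{p-1}\}$, $k_\bullet=(k-k_0)/(p-1)$. For $s\in\{0,\dots,p-2\}$: $a_s=\{k_0-2-2s\}$, $\delta_s=\lfloor\frac{s+\{a_s+s\}}{p-1}\rfloor$; if $a_s+s<p-1$, $t_1^{(s)}=s+\delta_s$, $t_2^{(s)}=a_s+s+\delta_s+2$; otherwise $t_1^{(s)}=\{a_s+s\}+\delta_s+1$, $t_2^{(s)}=s+\delta_s+1$. For $k\in\mathcal K$: $d_k^{ur,\dagger}(s)=\lfloor\frac{k_\bullet-t_1^{(s)}}{p+1}\rfloor+\lfloor\frac{k_\bullet-t_2^{(s)}}{p+1}\rfloor+2+\delta_s$. $S=\{\lceil\frac{k_0+1}{2}\rceil,\dots,\lfloor\frac{k_0+p-4}{2}\rfloor\}$. For $\phi:S\to\mathbb Z$, a pair $s<s'$ in $S$ is $\phi$-regular if $|\phi(s)-\phi(s')|\le1$ and, whenever $\phi(s)\neq\phi(s')$, $\phi(s')$ is odd; $\phi$ is odd dominant if every pair $s<s'$ in $S$ is $\phi$-regular. *)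

theory Defs
  imports Complex_Main "HOL-Computational_Algebra.Primes"
begin

definition res :: "int \<Rightarrow> int \<Rightarrow> int" where
  "res p n = n mod (p - 1)"

definition a_s :: "int \<Rightarrow> int \<Rightarrow> int \<Rightarrow> int" where
  "a_s p k0 s = res p (k0 - 2 - 2 * s)"

definition delta_s :: "int \<Rightarrow> int \<Rightarrow> int \<Rightarrow> int" where
  "delta_s p k0 s = \<lfloor>real_of_int (s + res p (a_s p k0 s + s)) / real_of_int (p - 1)\<rfloor>"

definition t1 :: "int \<Rightarrow> int \<Rightarrow> int \<Rightarrow> int" where
  "t1 p k0 s = (if a_s p k0 s + s < p - 1 then s + delta_s p k0 s
                else res p (a_s p k0 s + s) + delta_s p k0 s + 1)"

definition t2 :: "int \<Rightarrow> int \<Rightarrow> int \<Rightarrow> int" where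
  "t2 p k0 s = (if a_s p k0 s + s < p - 1 then a_s p k0 s + s + delta_s p k0 s + 2
                else s + delta_s p k0 s + 1)"

definition kbul :: "int \<Rightarrow> int \<Rightarrow> int \<Rightarrow> int" where
  "kbul p k0 k = (k - k0) div (p - 1)"

definition d_ur :: "int \<Rightarrow> int \<Rightarrow> int \<Rightarrow> int \<Rightarrow> int" where
  "d_ur p k0 k s =
     \<lfloor>real_of_int (kbul p k0 k - t1 p k0 s) / real_of_int (p + 1)\<rfloor>
   + \<lfloor>real_of_int (kbul p k0 k - t2 p k0 s) / real_of_int (p + 1)\<rfloor>
   + 2 + delta_s p k0 s"

definition Kset :: "int \<Rightarrow> int \<Rightarrow> int set" where
  "Kset p k0 = {k. k \<ge> 2 \<and> k mod (p - 1) = k0 mod (p - 1)}"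

definition Sset :: "int \<Rightarrow> int \<Rightarrow> int set" where
  "Sset p k0 = {\<lceil>real_of_int (k0 + 1) / 2\<rceil> .. \<lfloor>real_of_int (k0 + p - 4) / 2\<rfloor>}"

definition phi_regular :: "(int \<Rightarrow> int) \<Rightarrow> int \<Rightarrow> int \<Rightarrow> bool" where
  "phi_regular \<phi> s s' \<longleftrightarrow> \<bar>\<phi> s - \<phi> s'\<bar> \<le> 1 \<and> (\<phi> s \<noteq> \<phi> s' \<longrightarrow> odd (\<phi> s'))"

definition odd_dominant :: "int set \<Rightarrow> (int \<Rightarrow> int) \<Rightarrow> bool" where
  "odd_dominant S \<phi> \<longleftrightarrow> (\<forall>s\<in>S. \<forall>s'\<in>S. s < s' \<longrightarrow> phi_regular \<phi> s s')"

end

theory Submission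
  imports Defs
begin

text \<open>
  On \<open>S\<close> one has \<open>a\<^sub>s = k\<^sub>0 + p - 3 - 2s\<close>, and the two regimes \<open>s \<ge> k\<^sub>0 - 1\<close>
  (\<open>\<delta>\<^sub>s = 1\<close>) and \<open>s < k\<^sub>0 - 1\<close> (\<open>\<delta>\<^sub>s = 0\<close>) give the same closed form
  \<open>d(s) = \<lfloor>(k\<^sub>\<bullet> - s - 1)/(p+1)\<rfloor> + \<lfloor>(k\<^sub>\<bullet> - k\<^sub>0 + 1 + s)/(p+1)\<rfloor> + 2\<close>.
  For \<open>s < s'\<close> in \<open>S\<close> the four shifts \<open>k\<^sub>0-1-s' \<le> k\<^sub>0-1-s \<le> s+1 \<le> s'+1\<close> lie within
  one period \<open>p+1\<close>, so the four quotients \<open>A \<ge> B \<ge> C \<ge> D\<close> satisfy \<open>A \<le> D + 1\<close>.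
  Hence \<open>d(s') = A + D + 2\<close> is odd unless all four agree, and \<open>d(s) = B + C + 2\<close>
  differs from it by at most one.
\<close>

lemma Sset_bounds:
  assumes "s \<in> Sset p k0"
  shows "k0 + 1 \<le> 2 * s" "2 * s \<le> k0 + p - 4"
proof -
  from assms have "\<lceil>real_of_int (k0 + 1) / 2\<rceil> \<le> s"
    and "s \<le> \<lfloor>real_of_int (k0 + p - 4) / 2\<rfloor>" by (auto simp: Sset_def)
  then have "real_of_int (k0 + 1) / 2 \<le> real_of_int s"
    and "real_of_int s \<le> real_of_int (k0 + p - 4) / 2"
    by (simp_all add: ceiling_le_iff le_floor_iff)
  then have "real_of_int (k0 + 1) \<le> real_of_int (2 * s)"
    and "real_of_int (2 * s) \<le> real_of_int (k0 + p - 4)" by simp_all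
  then show "k0 + 1 \<le> 2 * s" "2 * s \<le> k0 + p - 4" by simp_all
qed

lemma a_s_on_Sset:
  assumes "s \<in> Sset p k0"
  shows "a_s p k0 s = k0 + p - 3 - 2 * s"
proof -
  have "k0 - 2 - 2 * s = (k0 + p - 3 - 2 * s) + (-1) * (p - 1)" by simp
  then have "(k0 - 2 - 2 * s) mod (p - 1) = (k0 + p - 3 - 2 * s) mod (p - 1)"
    by (metis mod_mult_self1)
  also have "\<dots> = k0 + p - 3 - 2 * s"
    using Sset_bounds[OF assms] by (intro mod_pos_pos_trivial) auto
  finally show ?thesis by (simp add: a_s_def res_def)
qed

lemma delta_t_on_Sset_upper:
  assumes "s \<in> Sset p k0" "2 \<le> k0" "k0 \<le> p" "k0 - 1 \<le> s"
  shows "delta_s p k0 s = 1" "t1 p k0 s = s + 1" "t2 p k0 s = k0 + p - s"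
proof -
  note a = a_s_on_Sset[OF assms(1)] and b = Sset_bounds[OF assms(1)]
  have "a_s p k0 s + s = k0 + p - 3 - s" using a by simp
  then have r: "res p (a_s p k0 s + s) = k0 + p - 3 - s"
    unfolding res_def using b assms by (simp add: mod_pos_pos_trivial)
  have "(k0 + p - 3) div (p - 1) = ((k0 - 2) + 1 * (p - 1)) div (p - 1)" by simp
  also have "\<dots> = 1 + (k0 - 2) div (p - 1)" using b by (intro div_mult_self1) simp
  also have "(k0 - 2) div (p - 1) = 0" using assms b by (intro div_pos_pos_trivial) auto
  finally have "(k0 + p - 3) div (p - 1) = 1" by simp
  moreover have "s + (k0 + p - 3 - s) = k0 + p - 3" by simp
  ultimately show d: "delta_s p k0 s = 1"
    unfolding delta_s_def r floor_divide_of_int_eq by presburger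
  have "a_s p k0 s + s < p - 1" using a assms by simp
  then show "t1 p k0 s = s + 1" "t2 p k0 s = k0 + p - s"
    unfolding t1_def t2_def d a by auto
qed

lemma delta_t_on_Sset_lower:
  assumes "s \<in> Sset p k0" "2 \<le> k0" "k0 \<le> p" "s < k0 - 1"
  shows "delta_s p k0 s = 0" "t1 p k0 s = k0 - 1 - s" "t2 p k0 s = s + 1"
proof -
  note a = a_s_on_Sset[OF assms(1)] and b = Sset_bounds[OF assms(1)]
  have "res p (a_s p k0 s + s) = ((k0 - 2 - s) + (p - 1)) mod (p - 1)"
    unfolding res_def a by (simp add: algebra_simps)
  also have "\<dots> = k0 - 2 - s"
    unfolding mod_add_self2 using b assms by (intro mod_pos_pos_trivial) auto
  finally have r: "res p (a_s p k0 s + s) = k0 - 2 - s" .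
  show d: "delta_s p k0 s = 0"
    unfolding delta_s_def r floor_divide_of_int_eq using b assms by (simp add: div_pos_pos_trivial)
  have "\<not> a_s p k0 s + s < p - 1" using a assms by simp
  then show "t1 p k0 s = k0 - 1 - s" "t2 p k0 s = s + 1"
    unfolding t1_def t2_def d r by auto
qed

lemma d_ur_on_Sset:
  assumes "s \<in> Sset p k0" "2 \<le> k0" "k0 \<le> p"
  shows "d_ur p k0 k s =
    (kbul p k0 k - (s + 1)) div (p + 1) + (kbul p k0 k - (k0 - 1 - s)) div (p + 1) + 2"
proof (cases "k0 - 1 \<le> s")
  case True
  have "kbul p k0 k - (k0 + p - s) = (kbul p k0 k - (k0 - 1 - s)) + (-1) * (p + 1)" by simp
  moreover have "p + 1 \<noteq> 0" using Sset_bounds[OF assms(1)] by simp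
  ultimately have "(kbul p k0 k - (k0 + p - s)) div (p + 1)
      = (kbul p k0 k - (k0 - 1 - s)) div (p + 1) - 1"
    by (metis div_mult_self1 diff_conv_add_uminus add.commute)
  then show ?thesis
    using delta_t_on_Sset_upper[OF assms True] unfolding d_ur_def floor_divide_of_int_eq by simp
next
  case False
  then show ?thesis
    using delta_t_on_Sset_lower[OF assms] unfolding d_ur_def floor_divide_of_int_eq by simp
qed

lemma zdiv_diff_chain:
  fixes K q a b c d :: int
  assumes "q > 0" "a \<le> b" "b \<le> c" "c \<le> d" "d - a \<le> q"
  shows "(K - d) div q \<le> (K - c) div q" "(K - c) div q \<le> (K - b) div q"
    "(K - b) div q \<le> (K - a) div q" "(K - a) div q \<le> (K - d) div q + 1"
proof -
  show "(K - d) div q \<le> (K - c) div q" "(K - c) div q \<le> (K - b) div q"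
    "(K - b) div q \<le> (K - a) div q"
    using assms by (auto intro: zdiv_mono1)
  have "(K - a) div q \<le> ((K - d) + 1 * q) div q" using assms by (intro zdiv_mono1) auto
  then show "(K - a) div q \<le> (K - d) div q + 1" using assms by simp
qed

lemma phi_regular_of_quotients:
  fixes A B C D :: int
  assumes "\<phi> s = C + B + 2" "\<phi> s' = D + A + 2"
    and "D \<le> C" "C \<le> B" "B \<le> A" "A \<le> D + 1"
  shows "phi_regular \<phi> s s'"
proof (cases "A = D")
  case True
  then show ?thesis using assms by (simp add: phi_regular_def)
next
  case False
  then have "A = D + 1" using assms by simp
  then show ?thesis using assms unfolding phi_regular_def by presburger
qed

theorem mainTheorem8:
  fixes p k0 k :: int
  assumes "prime p" and "p \<ge> 7"
    and "2 \<le> k0" and "k0 \<le> p"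
    and "k \<in> Kset p k0"
  shows "odd_dominant (Sset p k0) (\<lambda>s. d_ur p k0 k s)"
  unfolding odd_dominant_def
proof (intro ballI impI)
  fix s s' assume s: "s \<in> Sset p k0" and s': "s' \<in> Sset p k0" and "s < s'"
  moreover note Sset_bounds[OF s] Sset_bounds[OF s']
  ultimately have "k0 - 1 - s' \<le> k0 - 1 - s" "k0 - 1 - s \<le> s + 1" "s + 1 \<le> s' + 1"
    "(s' + 1) - (k0 - 1 - s') \<le> p + 1" by linarith+
  note chain = zdiv_diff_chain[OF _ this, of "kbul p k0 k"]
  show "phi_regular (\<lambda>s. d_ur p k0 k s) s s'"
    by (rule phi_regular_of_quotients[where \<phi> = "\<lambda>s. d_ur p k0 k s",
          OF d_ur_on_Sset[OF s assms(3,4)] d_ur_on_Sset[OF s' assms(3,4)]])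
      (use chain assms in auto)
qed

end
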